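(* Let $0<p<1-1/e^2$ be constant, $b=\frac1{1-p}$, and $\gamma(n)=2\log_b n-2\log_b\log_b n-2\log_b 2$. Let $k=k(n)$ be positive integers such that $x=x(n):=\frac{n}{k}-\gamma(n)$ satisfies $x=O(1)$. Then, as $n\to\infty$, \[\bar\mu_{n,k}=b^{-\frac{x}{2}n+o(n)}.\]
   Context: For $n\in\mathbb{N}$ let $m(n)=\lfloor p\binom n2\rfloor$ and $G\sim\mathcal{G}(n,m(n))$, the uniform random graph on $n$ labelled vertices with exactly $m(n)$ edges. An ordered $k$-equipartition of $[n]$ is an ordered partition into $k$ parts each of size $\lceil n/k\rceil$ or $\lfloor n/k\rfloor$, the larger parts listed first. Let $k_{\mathrm L}=n-k\lfloor n/k\rfloor$ (number of parts of size $\lceil n/k\rceil$) and $k_{\mathrm S}=k-k_{\mathrm L}$. Let $X_{n,k}$ be the number of ordered $k$-equipartitions all of whose parts are independent in $G$, $\mu_{n,k}=\mathbb{E}[X_{n,k}]$ and $\bar\mu_{n,k}=\mu_{n,k}/(k_{\mathrm L}!\,k_{\mathrm S}!)$. *)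

theory Defs
  imports "HOL-Probability.Probability" "HOL-Library.Landau_Symbols"
begin

text \<open>Simple graphs on the vertex set {0..<n}, represented by their edge sets
  (sets of 2-element subsets of {0..<n}).\<close>

definition all_edges :: "nat \<Rightarrow> nat set set" where
  "all_edges n = {e. e \<subseteq> {0..<n} \<and> card e = 2}"

definition m_edges :: "real \<Rightarrow> nat \<Rightarrow> nat" where
  "m_edges p n = nat \<lfloor>p * real (n choose 2)\<rfloor>"

definition Gnm :: "nat \<Rightarrow> nat \<Rightarrow> nat set set pmf" where
  "Gnm n m = pmf_of_set {E. E \<subseteq> all_edges n \<and> card E = m}"

definition independent_in :: "nat set set \<Rightarrow> nat set \<Rightarrow> bool" where
  "independent_in E S \<longleftrightarrow> (\<forall>u\<in>S. \<forall>v\<in>S. {u, v} \<notin> E)"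

text \<open>Number of parts of size ceil(n/k) and of size floor(n/k).\<close>
definition kL :: "nat \<Rightarrow> nat \<Rightarrow> nat" where
  "kL n k = n - k * (n div k)"

definition kS :: "nat \<Rightarrow> nat \<Rightarrow> nat" where
  "kS n k = k - kL n k"

definition equipartitions :: "nat \<Rightarrow> nat \<Rightarrow> (nat \<Rightarrow> nat set) set" where
  "equipartitions n k = {P.
     (\<forall>i. k \<le> i \<longrightarrow> P i = {}) \<and>
     (\<Union>i<k. P i) = {0..<n} \<and>
     (\<forall>i<k. \<forall>j<k. i \<noteq> j \<longrightarrow> P i \<inter> P j = {}) \<and>
     (\<forall>i<k. card (P i) = (if i < kL n k then nat \<lceil>real n / real k\<rceil>
                                         else nat \<lfloor>real n / real k\<rfloor>))}"

definition X_count :: "nat \<Rightarrow> nat \<Rightarrow> nat set set \<Rightarrow> nat" where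
  "X_count n k E = card {P \<in> equipartitions n k. \<forall>i<k. independent_in E (P i)}"

definition mu :: "real \<Rightarrow> nat \<Rightarrow> nat \<Rightarrow> real" where
  "mu p n k = measure_pmf.expectation (Gnm n (m_edges p n)) (\<lambda>E. real (X_count n k E))"

definition mu_bar :: "real \<Rightarrow> nat \<Rightarrow> nat \<Rightarrow> real" where
  "mu_bar p n k = mu p n k / (fact (kL n k) * fact (kS n k))"

end

theory Submission
  imports Defs "HOL-Real_Asymp.Real_Asymp"
begin

(*
  By linearity of expectation, mu is the number of ordered equipartitions times the
  probability that a fixed one has no edge inside a part.  The first factor is
  n! / prod_i |V_i|!; the second is hypergeometric and, after swapping the roles of the
  m = floor(p N) edges and the f pairs lying inside parts, equals
  C(N - m, f) / C(N, f) = (1 - p)^f exp(O(t^2)) with t = n/k, while f = n (t - 1) / 2 + O(k).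
  Crude Stirling bounds then give
    ln mu_bar = (n - k) (ln k - t ln b / 2) + O(k log t + t^2 + log n).
  Writing t = gamma + x, the definition of gamma turns ln k - t ln b / 2 into
  ln (2 log_b n / t) - x ln b / 2, and 2 log_b n / t tends to 1 because x is bounded;
  hence ln mu_bar / n = - x ln b / 2 + o(1).
*)

section \<open>Counting equipartitions\<close>

definition sized_partitions :: "'a set \<Rightarrow> nat \<Rightarrow> (nat \<Rightarrow> nat) \<Rightarrow> (nat \<Rightarrow> 'a set) set" where
  "sized_partitions A k c = {P. (\<forall>i. k \<le> i \<longrightarrow> P i = {}) \<and> (\<Union>i<k. P i) = A \<and>
     (\<forall>i<k. \<forall>j<k. i \<noteq> j \<longrightarrow> P i \<inter> P j = {}) \<and> (\<forall>i<k. card (P i) = c i)}"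

lemma fun_upd_mem_sized_partitions:
  assumes S: "S \<subseteq> A" "card S = c k" and P: "P \<in> sized_partitions (A - S) k c"
  shows "P(k := S) \<in> sized_partitions A (Suc k) c"
proof -
  have U: "(\<Union>i<Suc k. (P(k := S)) i) = (\<Union>i<k. P i) \<union> S"
    by (auto simp: lessThan_Suc)
  show ?thesis
    using S P unfolding sized_partitions_def
    by (simp only: mem_Collect_eq U) (auto simp: less_Suc_eq)
qed

lemma fun_upd_empty_mem_sized_partitions:
  assumes Q: "Q \<in> sized_partitions A (Suc k) c"
  shows "Q k \<subseteq> A" "card (Q k) = c k" "Q(k := {}) \<in> sized_partitions (A - Q k) k c"
proof -
  have disj: "\<And>i j. i < Suc k \<Longrightarrow> j < Suc k \<Longrightarrow> i \<noteq> j \<Longrightarrow> Q i \<inter> Q j = {}"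
    and U0: "(\<Union>i<Suc k. Q i) = A" and ext: "\<And>i. Suc k \<le> i \<Longrightarrow> Q i = {}"
    and cd: "\<And>i. i < Suc k \<Longrightarrow> card (Q i) = c i"
    using Q unfolding sized_partitions_def by auto
  have U: "(\<Union>i<k. Q i) \<union> Q k = A" using U0 by (simp add: lessThan_Suc Un_commute)
  have "Q i \<inter> Q k = {}" if "i < k" for i using disj[of i k] that by simp
  with U have U': "(\<Union>i<k. Q i) = A - Q k" by blast
  show "Q k \<subseteq> A" using U by blast
  show "card (Q k) = c k" using cd by simp
  show "Q(k := {}) \<in> sized_partitions (A - Q k) k c"
    unfolding sized_partitions_def
  proof (intro CollectI conjI allI impI)
    show "(Q(k := {})) i = {}" if "k \<le> i" for i using ext[of i] that by (cases "i = k") auto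
    show "(\<Union>i<k. (Q(k := {})) i) = A - Q k" using U' by simp
    show "(Q(k := {})) i \<inter> (Q(k := {})) j = {}" if "i < k" "j < k" "i \<noteq> j" for i j
      using disj[of i j] that by simp
    show "card ((Q(k := {})) i) = c i" if "i < k" for i using cd[of i] that by simp
  qed
qed

lemma sized_partitions_Suc_bij:
  "bij_betw (\<lambda>(S, P). P(k := S))
     (SIGMA S:{S. S \<subseteq> A \<and> card S = c k}. sized_partitions (A - S) k c)
     (sized_partitions A (Suc k) c)"
proof (rule bij_betw_byWitness[where f' = "\<lambda>Q. (Q k, Q(k := {}))"])
  show "\<forall>a\<in>(SIGMA S:{S. S \<subseteq> A \<and> card S = c k}. sized_partitions (A - S) k c).
      (\<lambda>Q. (Q k, Q(k := {}))) ((\<lambda>(S, P). P(k := S)) a) = a"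
  proof clarify
    fix S P assume "P \<in> sized_partitions (A - S) k c"
    then have "P(k := {}) = P" by (simp add: sized_partitions_def fun_upd_idem)
    then show "(P(k := S)) k = S \<and> (P(k := S))(k := {}) = P" by simp
  qed
  show "\<forall>a'\<in>sized_partitions A (Suc k) c. (\<lambda>(S, P). P(k := S)) ((\<lambda>Q. (Q k, Q(k := {}))) a') = a'"
    by (auto simp: fun_eq_iff)
  show "(\<lambda>(S, P). P(k := S)) ` (SIGMA S:{S. S \<subseteq> A \<and> card S = c k}. sized_partitions (A - S) k c)
      \<subseteq> sized_partitions A (Suc k) c"
  proof (rule image_subsetI)
    fix a assume "a \<in> (SIGMA S:{S. S \<subseteq> A \<and> card S = c k}. sized_partitions (A - S) k c)"
    then obtain S P where "a = (S, P)" "S \<subseteq> A" "card S = c k" "P \<in> sized_partitions (A - S) k c"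
      by blast
    then show "(\<lambda>(S, P). P(k := S)) a \<in> sized_partitions A (Suc k) c"
      by (simp add: fun_upd_mem_sized_partitions)
  qed
  show "(\<lambda>Q. (Q k, Q(k := {}))) ` sized_partitions A (Suc k) c
      \<subseteq> (SIGMA S:{S. S \<subseteq> A \<and> card S = c k}. sized_partitions (A - S) k c)"
  proof (rule image_subsetI)
    fix Q assume "Q \<in> sized_partitions A (Suc k) c"
    from fun_upd_empty_mem_sized_partitions[OF this]
    show "(Q k, Q(k := {})) \<in> (SIGMA S:{S. S \<subseteq> A \<and> card S = c k}. sized_partitions (A - S) k c)"
      by blast
  qed
qed

lemma card_sized_partitions:
  assumes "finite A" "sum c {..<k} = card A"
  shows "card (sized_partitions A k c) * (\<Prod>i<k. fact (c i)) = fact (card A)"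
  using assms
proof (induction k arbitrary: A)
  case 0
  then have "A = {}" by simp
  then have "sized_partitions A 0 c = {\<lambda>_. {}}" by (auto simp: sized_partitions_def)
  then show ?case using \<open>A = {}\<close> by simp
next
  case (Suc k)
  define Ss where "Ss = {S. S \<subseteq> A \<and> card S = c k}"
  define Pk where "Pk = (\<Prod>i<k. fact (c i) :: nat)"
  have ck: "c k \<le> card A" using Suc.prems by simp
  have IH: "card (sized_partitions (A - S) k c) * Pk = fact (card A - c k)" if "S \<in> Ss" for S
  proof -
    have "card (A - S) = card A - c k"
      using that Suc.prems by (auto simp: Ss_def card_Diff_subset finite_subset)
    then show ?thesis using Suc.IH[of "A - S"] Suc.prems unfolding Pk_def by simp
  qed
  have fin: "finite (sized_partitions (A - S) k c)" if "S \<in> Ss" for S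
    using IH[OF that] card.infinite by fastforce
  have "card (sized_partitions A (Suc k) c) = card (SIGMA S:Ss. sized_partitions (A - S) k c)"
    using bij_betw_same_card[OF sized_partitions_Suc_bij[of k A c]] unfolding Ss_def by simp
  also have "\<dots> = (\<Sum>S\<in>Ss. card (sized_partitions (A - S) k c))"
    using Suc.prems fin by (simp add: card_SigmaI Ss_def)
  finally have "card (sized_partitions A (Suc k) c) * Pk = (\<Sum>S\<in>Ss. fact (card A - c k))"
    using IH by (simp add: sum_distrib_right)
  also have "\<dots> = (card A choose c k) * fact (card A - c k)"
    using n_subsets[OF Suc.prems(1), of "c k"] by (simp add: Ss_def)
  finally have "card (sized_partitions A (Suc k) c) * Pk * fact (c k)
      = fact (c k) * fact (card A - c k) * (card A choose c k)"
    by simp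
  also have "\<dots> = fact (card A)" using binomial_fact_lemma[OF ck] by simp
  finally show ?case by (simp add: Pk_def mult.assoc)
qed

lemma kL_eq_mod: "kL n k = n mod k"
  unfolding kL_def by (metis minus_div_mult_eq_mod mult.commute)

definition equipart_size :: "nat \<Rightarrow> nat \<Rightarrow> nat \<Rightarrow> nat" where
  "equipart_size n k i = (if i < n mod k then Suc (n div k) else n div k)"

lemma nat_floor_divide_of_nat: "nat \<lfloor>real n / real k\<rfloor> = n div k"
  by (simp add: floor_divide_of_nat_eq)

lemma nat_ceiling_divide_of_nat:
  assumes "k > 0" "n mod k \<noteq> 0"
  shows "nat \<lceil>real n / real k\<rceil> = Suc (n div k)"
proof -
  have "real n = real k * real (n div k) + real (n mod k)"
    by (metis div_mult_mod_eq of_nat_add of_nat_mult mult.commute)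
  then have "real n / real k = real (n div k) + real (n mod k) / real k"
    using assms by (simp add: field_simps)
  moreover have "0 < real (n mod k) / real k" "real (n mod k) / real k < 1"
    using assms by auto
  ultimately have "\<lceil>real n / real k\<rceil> = int (n div k) + 1"
    by (subst ceiling_eq_iff) simp
  then show ?thesis by simp
qed

lemma equipartitions_eq_sized_partitions:
  assumes "k > 0"
  shows "equipartitions n k = sized_partitions {0..<n} k (equipart_size n k)"
proof -
  have "(if i < kL n k then nat \<lceil>real n / real k\<rceil> else nat \<lfloor>real n / real k\<rfloor>)
      = equipart_size n k i" for i
    using nat_ceiling_divide_of_nat[OF assms, of n]
    by (auto simp: kL_eq_mod equipart_size_def nat_floor_divide_of_nat)
  then show ?thesis unfolding equipartitions_def sized_partitions_def by simp
qed

lemma sum_if_less: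
  assumes "r \<le> k"
  shows "(\<Sum>i<k. if i < r then a else b) = of_nat r * a + of_nat (k - r) * (b :: 'a :: comm_semiring_1)"
proof -
  have "{..<k} \<inter> {i. i < r} = {..<r}" "{..<k} \<inter> - {i. i < r} = {r..<k}"
    using assms by auto
  then show ?thesis by (simp add: sum.If_cases)
qed

lemma sum_equipart_size:
  assumes "k > 0"
  shows "sum (equipart_size n k) {..<k} = n"
proof -
  have "sum (equipart_size n k) {..<k} = (\<Sum>i<k. if i < n mod k then Suc (n div k) else n div k)"
    by (simp add: equipart_size_def)
  also have "\<dots> = n mod k * Suc (n div k) + (k - n mod k) * (n div k)"
    using assms by (simp add: sum_if_less less_imp_le)
  also have "\<dots> = n"
    using assms by (simp add: algebra_simps diff_mult_distrib)
  finally show ?thesis .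
qed

lemma card_equipartitions:
  assumes "k > 0"
  shows "real (card (equipartitions n k)) = fact n / (\<Prod>i<k. fact (equipart_size n k i))"
proof -
  have "card (equipartitions n k) * (\<Prod>i<k. fact (equipart_size n k i)) = fact n"
    using card_sized_partitions[of "{0..<n}" "equipart_size n k" k]
    by (simp add: sum_equipart_size assms equipartitions_eq_sized_partitions)
  from arg_cong[where f = real, OF this]
  have "real (card (equipartitions n k)) * (\<Prod>i<k. fact (equipart_size n k i)) = fact n"
    by (simp only: of_nat_fact of_nat_mult of_nat_prod)
  moreover have "(\<Prod>i<k. fact (equipart_size n k i) :: real) > 0" by (simp add: prod_pos)
  ultimately show ?thesis by (simp add: eq_divide_eq)
qed

lemma finite_equipartitions:
  assumes "k > 0"
  shows "finite (equipartitions n k)"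
  using card_equipartitions[OF assms, of n] card.infinite by fastforce

section \<open>The expected number of independent equipartitions\<close>

lemma card_all_edges: "card (all_edges n) = n choose 2"
  unfolding all_edges_def using n_subsets[of "{0..<n}" 2] by simp

lemma finite_all_edges: "finite (all_edges n)"
  unfolding all_edges_def by simp

definition inner_edges :: "(nat \<Rightarrow> 'a set) \<Rightarrow> nat \<Rightarrow> 'a set set" where
  "inner_edges P k = (\<Union>i<k. {e. e \<subseteq> P i \<and> card e = 2})"

definition inner_pairs :: "nat \<Rightarrow> nat \<Rightarrow> nat" where
  "inner_pairs n k = (\<Sum>i<k. equipart_size n k i choose 2)"

lemma independent_parts_iff_disjoint_inner_edges:
  assumes "E \<subseteq> all_edges n"
  shows "(\<forall>i<k. independent_in E (P i)) \<longleftrightarrow> E \<inter> inner_edges P k = {}"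
proof
  assume indep: "\<forall>i<k. independent_in E (P i)"
  show "E \<inter> inner_edges P k = {}"
  proof (rule ccontr)
    assume "E \<inter> inner_edges P k \<noteq> {}"
    then obtain e i where e: "e \<in> E" "i < k" "e \<subseteq> P i" "card e = 2"
      unfolding inner_edges_def by blast
    then obtain u v where "e = {u, v}" by (auto simp: card_2_iff)
    then show False using indep e unfolding independent_in_def by auto
  qed
next
  assume disj: "E \<inter> inner_edges P k = {}"
  show "\<forall>i<k. independent_in E (P i)"
    unfolding independent_in_def
  proof (intro allI impI ballI notI)
    fix i u v assume "i < k" "u \<in> P i" "v \<in> P i" "{u, v} \<in> E"
    moreover from \<open>{u, v} \<in> E\<close> have "card {u, v} = 2"
      using assms unfolding all_edges_def by auto
    ultimately show False using disj unfolding inner_edges_def by auto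
  qed
qed

lemma inner_edges_subset_all_edges:
  assumes "P \<in> sized_partitions {0..<n} k c"
  shows "inner_edges P k \<subseteq> all_edges n"
proof -
  have "P i \<subseteq> {0..<n}" if "i < k" for i using assms that unfolding sized_partitions_def by auto
  then show ?thesis unfolding inner_edges_def all_edges_def by blast
qed

lemma card_inner_edges:
  assumes "P \<in> sized_partitions A k c" "finite A"
  shows "card (inner_edges P k) = (\<Sum>i<k. c i choose 2)"
proof -
  have fin: "finite (P i)" if "i < k" for i
    using assms that unfolding sized_partitions_def by (auto intro: finite_subset)
  have disj: "P i \<inter> P j = {}" if "i < k" "j < k" "i \<noteq> j" for i j
    using assms that unfolding sized_partitions_def by auto
  have "card (inner_edges P k) = (\<Sum>i<k. card {e. e \<subseteq> P i \<and> card e = 2})"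
    unfolding inner_edges_def
  proof (rule card_UN_disjoint)
    show "\<forall>i\<in>{..<k}. \<forall>j\<in>{..<k}. i \<noteq> j \<longrightarrow>
        {e. e \<subseteq> P i \<and> card e = 2} \<inter> {e. e \<subseteq> P j \<and> card e = 2} = {}"
      using disj by (fastforce simp: card_2_iff)
  qed (use fin in auto)
  also have "\<dots> = (\<Sum>i<k. c i choose 2)"
    using assms(1) by (intro sum.cong) (auto simp: n_subsets fin sized_partitions_def)
  finally show ?thesis .
qed

lemma sum_card_filter_swap:
  assumes "finite A" "finite B"
  shows "(\<Sum>a\<in>A. card {b\<in>B. R a b}) = (\<Sum>b\<in>B. card {a\<in>A. R a b})"
proof -
  have "(\<Sum>a\<in>A. card {b\<in>B. R a b}) = (\<Sum>a\<in>A. \<Sum>b\<in>B. if R a b then 1 else 0)"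
    using assms by (simp add: sum.If_cases Int_def conj_commute)
  also have "\<dots> = (\<Sum>b\<in>B. \<Sum>a\<in>A. if R a b then 1 else 0)" by (rule sum.swap)
  also have "\<dots> = (\<Sum>b\<in>B. card {a\<in>A. R a b})"
    using assms by (simp add: sum.If_cases Int_def conj_commute)
  finally show ?thesis .
qed

lemma card_graphs_with_independent_parts:
  assumes "k > 0" "P \<in> equipartitions n k"
  shows "card {E. (E \<subseteq> all_edges n \<and> card E = m) \<and> (\<forall>i<k. independent_in E (P i))}
       = ((n choose 2) - inner_pairs n k) choose m"
proof -
  have P: "P \<in> sized_partitions {0..<n} k (equipart_size n k)"
    using assms equipartitions_eq_sized_partitions by blast
  have "{E. (E \<subseteq> all_edges n \<and> card E = m) \<and> (\<forall>i<k. independent_in E (P i))}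
      = {E. E \<subseteq> all_edges n - inner_edges P k \<and> card E = m}"
    using independent_parts_iff_disjoint_inner_edges by blast
  moreover have "card (all_edges n - inner_edges P k) = (n choose 2) - inner_pairs n k"
    using card_Diff_subset[OF finite_subset[OF inner_edges_subset_all_edges[OF P] finite_all_edges]
        inner_edges_subset_all_edges[OF P]]
    by (simp add: card_all_edges card_inner_edges[OF P] inner_pairs_def)
  ultimately show ?thesis
    using n_subsets[of "all_edges n - inner_edges P k" m] finite_all_edges by simp
qed

lemma mu_eq:
  assumes "k > 0" and "m_edges p n \<le> n choose 2"
  shows "mu p n k = real (card (equipartitions n k)) *
     real (((n choose 2) - inner_pairs n k) choose m_edges p n) / real ((n choose 2) choose m_edges p n)"
proof -
  define m where "m = m_edges p n"
  define Om where "Om = {E. E \<subseteq> all_edges n \<and> card E = m}"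
  define EQ where "EQ = equipartitions n k"
  have finOm: "finite Om" unfolding Om_def using finite_all_edges by simp
  have cardOm: "card Om = (n choose 2) choose m"
    unfolding Om_def using n_subsets[OF finite_all_edges, of n m] card_all_edges by simp
  with assms(2) have "Om \<noteq> {}" unfolding m_def by auto
  then have "mu p n k = (\<Sum>E\<in>Om. real (card {P\<in>EQ. \<forall>i<k. independent_in E (P i)})) / card Om"
    unfolding mu_def Gnm_def m_def[symmetric] Om_def[symmetric] X_count_def EQ_def
    by (rule integral_pmf_of_set[OF _ finOm])
  also have "(\<Sum>E\<in>Om. real (card {P\<in>EQ. \<forall>i<k. independent_in E (P i)}))
      = real (\<Sum>P\<in>EQ. card {E\<in>Om. \<forall>i<k. independent_in E (P i)})"
    unfolding of_nat_sum[symmetric] EQ_def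
    using sum_card_filter_swap[OF finOm finite_equipartitions[OF assms(1)]] by presburger
  also have "\<dots> = real (card EQ * (((n choose 2) - inner_pairs n k) choose m))"
    using card_graphs_with_independent_parts[OF assms(1)] by (simp add: EQ_def Om_def)
  finally show ?thesis unfolding cardOm EQ_def m_def by simp
qed

lemma choose_diff_mult_swap:
  assumes "m + f \<le> N"
  shows "((N - f) choose m) * (N choose f) = (N choose m) * ((N - m) choose f)"
proof -
  have "(N choose (N - f)) * ((N - f) choose m) = (N choose m) * ((N - m) choose (N - f - m))"
    using assms by (intro choose_mult) auto
  moreover have "N choose (N - f) = N choose f" using assms binomial_symmetric[of f N] by simp
  moreover have "(N - m) choose (N - f - m) = (N - m) choose f"
  proof -
    have "(N - m) choose f = (N - m) choose (N - m - f)"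
      using assms by (intro binomial_symmetric) simp
    moreover have "N - m - f = N - f - m" by simp
    ultimately show ?thesis by simp
  qed
  ultimately show ?thesis by (simp add: mult.commute)
qed

lemma mu_bar_eq:
  assumes "k > 0" and "m_edges p n + inner_pairs n k \<le> n choose 2"
  shows "mu_bar p n k =
    fact n / ((\<Prod>i<k. fact (equipart_size n k i)) * (fact (n mod k) * fact (k - n mod k)))
    * (real (((n choose 2) - m_edges p n) choose inner_pairs n k)
       / real ((n choose 2) choose inner_pairs n k))"
proof -
  define N m f where "N = n choose 2" "m = m_edges p n" "f = inner_pairs n k"
  have "m + f \<le> N" using assms(2) by (simp add: N_m_f_def)
  then have "real ((N - f) choose m) * real (N choose f) = real (N choose m) * real ((N - m) choose f)"
    using choose_diff_mult_swap by (metis of_nat_mult)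
  moreover have "real (N choose m) > 0" "real (N choose f) > 0" using \<open>m + f \<le> N\<close> by auto
  ultimately have "real ((N - f) choose m) / real (N choose m) = real ((N - m) choose f) / real (N choose f)"
    by (simp add: field_simps)
  moreover have "m \<le> N" using \<open>m + f \<le> N\<close> by simp
  ultimately show ?thesis
    using mu_eq[OF assms(1), of p n] card_equipartitions[OF assms(1), of n]
    unfolding mu_bar_def kS_def kL_eq_mod N_m_f_def
    by (simp add: field_simps)
qed

section \<open>Estimates for factorials and binomial coefficients\<close>

lemma ln_fact_bounds:
  assumes "n \<ge> 1"
  shows "real n * ln (real n) - real n \<le> ln (fact n)
       \<and> ln (fact n) \<le> real n * ln (real n) - real n + ln (real n) + 1"
  using assms
proof (induction n rule: dec_induct)
  case base
  then show ?case by simp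
next
  case (step n)
  have n: "real n > 0" using step.hyps by simp
  have "ln ((real n + 1) / real n) \<le> (real n + 1) / real n - 1"
    using n by (intro ln_le_minus_one) simp
  then have up: "real n * (ln (real n + 1) - ln (real n)) \<le> 1"
    using n by (simp add: ln_div field_simps)
  have "ln (real n / (real n + 1)) \<le> real n / (real n + 1) - 1"
    using n by (intro ln_le_minus_one) simp
  then have lo: "(real n + 1) * (ln (real n + 1) - ln (real n)) \<ge> 1"
    using n by (simp add: ln_div field_simps)
  have "ln (fact (Suc n) :: real) = ln (real n + 1) + ln (fact n)"
    by (simp add: ln_mult add.commute)
  then show ?case using step.IH up lo by (simp add: algebra_simps)
qed

lemma ln_fact_between:
  assumes "1 \<le> s" "s \<le> c" "c \<le> Suc s"
  shows "real c * (ln (real s) - 1) \<le> ln (fact c)"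
    and "ln (fact c) \<le> real c * (ln (real s + 1) - 1) + ln (real s + 1) + 1"
proof -
  have c: "c \<ge> 1" "ln (real s) \<le> ln (real c)" "ln (real c) \<le> ln (real s + 1)"
    using assms by auto
  have "real c * ln (real s) \<le> real c * ln (real c)" "real c * ln (real c) \<le> real c * ln (real s + 1)"
    using c by (auto intro: mult_left_mono)
  moreover have "real c * (ln (real s) - 1) = real c * ln (real s) - real c"
    and "real c * (ln (real s + 1) - 1) = real c * ln (real s + 1) - real c"
    by (simp_all add: algebra_simps)
  ultimately show "real c * (ln (real s) - 1) \<le> ln (fact c)"
    and "ln (fact c) \<le> real c * (ln (real s + 1) - 1) + ln (real s + 1) + 1"
    using c ln_fact_bounds[OF c(1)] by linarith+
qed

lemma ln_fact_mult_fact_bounds: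
  assumes "r \<le> k" "1 \<le> k"
  shows "real k * ln (real k) - 2 * real k \<le> ln (fact r * fact (k - r))"
    and "ln (fact r * fact (k - r)) \<le> real k * ln (real k) - real k + ln (real k) + 1"
proof -
  have eq: "fact r * fact (k - r) * real (k choose r) = fact k"
    using arg_cong[where f = real, OF binomial_fact_lemma[OF assms(1)]]
    by (simp only: of_nat_mult of_nat_fact)
  have "1 \<le> real (k choose r)" using assms by (simp add: Suc_le_eq)
  then have "fact r * fact (k - r) \<le> (fact k :: real)"
    using eq by (metis mult_cancel_left1 mult_left_mono fact_ge_zero mult_nonneg_nonneg)
  then have upper: "ln (fact r * fact (k - r) :: real) \<le> ln (fact k)" by simp
  have "real (k choose r) \<le> 2 ^ k"
    using binomial_le_pow2[of k r] by (metis of_nat_le_iff of_nat_numeral of_nat_power)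
  then have "fact k \<le> (fact r * fact (k - r) :: real) * 2 ^ k"
    using eq by (metis mult_left_mono fact_ge_zero mult_nonneg_nonneg)
  then have "ln (fact k :: real) \<le> ln (fact r * fact (k - r) * 2 ^ k)" by simp
  also have "\<dots> = ln (fact r * fact (k - r)) + real k * ln 2"
    by (simp add: ln_mult ln_realpow)
  finally have lower: "ln (fact k :: real) - real k * ln 2 \<le> ln (fact r * fact (k - r))" by simp
  have "real k * ln 2 \<le> real k"
    using mult_left_mono[OF less_imp_le[OF ln_2_less_1], of "real k"] by simp
  with upper lower ln_fact_bounds[OF assms(2)]
  show "real k * ln (real k) - 2 * real k \<le> ln (fact r * fact (k - r))"
    and "ln (fact r * fact (k - r)) \<le> real k * ln (real k) - real k + ln (real k) + 1"
    by linarith+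
qed

lemma real_choose_two: "real (c choose 2) = real c * (real c - 1) / 2"
proof (induction c)
  case (Suc c)
  have "Suc c choose 2 = c + (c choose 2)"
    using binomial_Suc_Suc[of c 1] by (simp only: Suc_1 choose_one)
  then show ?case using Suc.IH by (simp add: field_simps)
qed simp

lemma choose_diff_ratio_Suc:
  assumes "m + j < N"
  shows "real ((N - m) choose Suc j) / real (N choose Suc j)
       = real ((N - m) choose j) / real (N choose j) * ((real N - real m - real j) / (real N - real j))"
proof -
  have step: "real (a choose Suc j) = real (a choose j) * (real a - real j) / (real j + 1)"
    if "j < a" for a
  proof -
    have "Suc j * (a choose Suc j) = (a - j) * (a choose j)"
      by (metis binomial_absorb_comp binomial_absorption)
    then have "real (Suc j) * real (a choose Suc j) = (real a - real j) * real (a choose j)"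
      using that by (metis of_nat_diff of_nat_mult less_imp_le)
    then show ?thesis by (simp add: field_simps)
  qed
  have e1: "real ((N - m) choose Suc j) = real ((N - m) choose j) * (real N - real m - real j) / (real j + 1)"
    using step[of "N - m"] assms by (simp add: of_nat_diff)
  have e2: "real (N choose Suc j) = real (N choose j) * (real N - real j) / (real j + 1)"
    using step[of N] assms by simp
  have "real (N choose j) > 0" "real N - real j > 0" using assms by auto
  moreover have "\<And>A B a d e :: real. B \<noteq> 0 \<Longrightarrow> d \<noteq> 0 \<Longrightarrow> e \<noteq> 0 \<Longrightarrow>
      (A * a / e) / (B * d / e) = A / B * (a / d)"
    by (simp add: field_simps)
  ultimately show ?thesis unfolding e1 e2 by simp
qed

text \<open>The ratio is the probability that a random f-subset of N pairs misses a fixed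
  m-subset; each factor of its product expansion lies between the two bases.\<close>

lemma choose_diff_ratio_bounds:
  fixes N m f :: nat
  assumes "m + f \<le> N" "f < N"
  shows "(1 - real m / (real N - real f)) ^ f \<le> real ((N - m) choose f) / real (N choose f)
       \<and> real ((N - m) choose f) / real (N choose f) \<le> (1 - real m / real N) ^ f"
proof -
  have "(1 - real m / (real N - real f)) ^ j \<le> real ((N - m) choose j) / real (N choose j)
       \<and> real ((N - m) choose j) / real (N choose j) \<le> (1 - real m / real N) ^ j" if "j \<le> f" for j
    using that
  proof (induction j)
    case (Suc j)
    have j: "m + j < N" "j < f" using Suc.prems assms by auto
    have Nj: "real N - real j > 0" and Nf: "real N - real f > 0" using j assms by auto
    have lo: "1 - real m / (real N - real f) \<le> (real N - real m - real j) / (real N - real j)"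
    proof -
      have "real m / (real N - real j) \<le> real m / (real N - real f)"
        using j Nf by (intro divide_left_mono) auto
      then show ?thesis using Nj by (simp add: field_simps)
    qed
    have hi: "(real N - real m - real j) / (real N - real j) \<le> 1 - real m / real N"
    proof -
      have "real m / real N \<le> real m / (real N - real j)"
        using Nj by (intro divide_left_mono) auto
      then show ?thesis using Nj by (simp add: field_simps)
    qed
    have IH: "(1 - real m / (real N - real f)) ^ j \<le> real ((N - m) choose j) / real (N choose j)"
      "real ((N - m) choose j) / real (N choose j) \<le> (1 - real m / real N) ^ j"
      using Suc j by auto
    have "0 \<le> 1 - real m / (real N - real f)" using Nf assms by (simp add: field_simps)
    moreover have "0 \<le> (real N - real m - real j) / (real N - real j)" using j Nj by simp
    moreover have "0 \<le> real ((N - m) choose j) / real (N choose j)" by simp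
    moreover have "0 \<le> (1 - real m / real N) ^ j" using assms by (simp add: divide_le_eq_1)
    ultimately show ?case
      unfolding choose_diff_ratio_Suc[OF j(1)] power_Suc
      using mult_mono[OF IH(1) lo] mult_mono[OF IH(2) hi]
      by (simp add: mult.commute)
  qed simp
  then show ?thesis by simp
qed

lemma m_edges_bounds:
  assumes "0 < p"
  shows "p * real (n choose 2) - 1 < real (m_edges p n)" and "real (m_edges p n) \<le> p * real (n choose 2)"
proof -
  have "real (m_edges p n) = of_int \<lfloor>p * real (n choose 2)\<rfloor>"
    unfolding m_edges_def using assms by simp
  then show "p * real (n choose 2) - 1 < real (m_edges p n)" "real (m_edges p n) \<le> p * real (n choose 2)"
    by linarith+
qed

lemma ln_one_minus_edge_density_upper:
  fixes p b :: real and N m :: nat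
  assumes "0 < p" "p < 1" "b = 1 / (1 - p)" "real N > 0"
    and "p * real N - 1 < real m" "real m \<le> p * real N"
  shows "1 - real m / real N > 0" and "ln (1 - real m / real N) \<le> - ln b + b / real N"
proof -
  have b: "b > 1" using assms(1-3) by (simp add: less_divide_eq)
  have "real m / real N \<le> p" using assms by (simp add: divide_le_eq)
  then show pos: "1 - real m / real N > 0" using assms by linarith
  have "(p * real N - 1) / real N \<le> real m / real N"
    using assms by (intro divide_right_mono) auto
  then have "real m / real N \<ge> p - 1 / real N" using assms by (simp add: field_simps)
  moreover have "(1 - p) * (1 + b / real N) = 1 - p + 1 / real N"
    using assms(2,3) by (simp add: field_simps)
  ultimately have "1 - real m / real N \<le> (1 - p) * (1 + b / real N)"
    by linarith
  then have "ln (1 - real m / real N) \<le> ln ((1 - p) * (1 + b / real N))"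
    using pos by simp
  also have "\<dots> = ln (1 - p) + ln (1 + b / real N)"
    using assms(2,4) b by (intro ln_mult_pos) (auto intro!: add_pos_pos)
  also have "ln (1 + b / real N) \<le> b / real N"
    using assms by (intro ln_add_one_self_le_self) simp
  finally show "ln (1 - real m / real N) \<le> - ln b + b / real N"
    using assms by (simp add: ln_div)
qed

lemma ln_one_minus_edge_density_lower:
  fixes p b :: real and N m f :: nat
  assumes "0 < p" "p < 1" "b = 1 / (1 - p)" "real N > 0"
    and "real m \<le> p * real N" and "real f \<le> real N / (4 * b)"
  shows "1 - real m / (real N - real f) > 0"
    and "ln (1 - real m / (real N - real f)) \<ge> - ln b - 4 * b * real f / real N"
proof -
  have b: "b > 1" "(1 - p) * b = 1" using assms(1-3) by (simp_all add: less_divide_eq)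
  have "real N / (4 * b) \<le> real N / 4"
    using assms(4) b by (intro divide_left_mono) auto
  then have Nf: "real N - real f \<ge> real N / 2" using assms(4,6) by linarith
  define y where "y = b * p * real f / (real N - real f)"
  have "y \<le> b * p * real f / (real N / 2)"
    unfolding y_def using Nf assms b by (intro divide_left_mono) auto
  then have y_le: "y \<le> 2 * b * p * real f / real N" by (simp add: ac_simps)
  have "2 * b * p * real f / real N \<le> p / 2"
    using assms b by (simp add: field_simps)
  moreover have "0 \<le> y" unfolding y_def using assms(1,4) Nf b by simp
  ultimately have y: "0 \<le> y" "y \<le> 1 / 2" using y_le assms(2) by linarith+
  have "2 * b * p * real f \<le> 2 * b * real f"
    using mult_left_mono[of p 1 "2 * b * real f"] b assms(2) by (simp add: ac_simps)
  then have y_small: "2 * y \<le> 4 * b * real f / real N"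
    using y_le divide_right_mono[of _ _ "real N"] assms(4) by fastforce
  have "(1 - p) * (1 - y) = (1 - p) - ((1 - p) * b) * (p * real f / (real N - real f))"
    unfolding y_def by (simp add: algebra_simps)
  also have "\<dots> = (1 - p) - p * real f / (real N - real f)"
    by (simp only: b(2) mult_1)
  also have "\<dots> = 1 - p * real N / (real N - real f)"
    using Nf assms(4) by (simp add: field_simps)
  finally have "(1 - p) * (1 - y) = 1 - p * real N / (real N - real f)" .
  moreover have "real m / (real N - real f) \<le> p * real N / (real N - real f)"
    using assms Nf by (intro divide_right_mono) auto
  ultimately have ge: "1 - real m / (real N - real f) \<ge> (1 - p) * (1 - y)" by linarith
  moreover have pos: "(1 - p) * (1 - y) > 0" using assms y by simp
  ultimately show "1 - real m / (real N - real f) > 0" by linarith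
  have "ln ((1 - p) * (1 - y)) \<le> ln (1 - real m / (real N - real f))"
    using ge pos by simp
  moreover have "ln ((1 - p) * (1 - y)) = ln (1 - p) + ln (1 - y)"
    using assms(2) y by (simp add: ln_mult)
  moreover have "ln (1 - y) \<ge> - y - 2 * y^2" using ln_one_minus_pos_lower_bound y by blast
  moreover have "2 * y^2 \<le> y"
    using mult_left_mono[of "2 * y" 1 y] y by (simp add: power2_eq_square)
  ultimately show "ln (1 - real m / (real N - real f)) \<ge> - ln b - 4 * b * real f / real N"
    using assms y_small by (simp add: ln_div)
qed

lemma ln_choose_diff_ratio_bounds:
  fixes p b :: real and N m f :: nat
  assumes "0 < p" "p < 1" "b = 1 / (1 - p)" "real N > 0"
    and "p * real N - 1 < real m" "real m \<le> p * real N" and "real f \<le> real N / (4 * b)"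
  defines "R \<equiv> real ((N - m) choose f) / real (N choose f)"
  shows "m + f < N" and "R > 0" and "- real f * ln b - 4 * b * real f ^ 2 / real N \<le> ln R"
    and "ln R \<le> - real f * ln b + b * real f / real N"
proof -
  have "real N / (4 * b) = real N / 4 - p * real N / 4"
    unfolding assms(3) using assms(2) by (simp add: field_simps)
  then have "real f \<le> real N / 4 - p * real N / 4" using assms(7) by simp
  moreover have "p * real N < real N" using assms(2,4) by simp
  ultimately have "real m + real f < real N" using assms(6) by linarith
  then show "m + f < N" by linarith
  then have mf: "m + f \<le> N" "f < N" by linarith+
  then show R: "R > 0" unfolding R_def by simp
  note bounds = choose_diff_ratio_bounds[OF mf, folded R_def]
  note upper = ln_one_minus_edge_density_upper[OF assms(1-6)]
  note lower = ln_one_minus_edge_density_lower[OF assms(1-4,6,7)]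
  have "ln R \<le> ln ((1 - real m / real N) ^ f)" using bounds R by simp
  also have "\<dots> \<le> real f * (- ln b + b / real N)"
    using upper by (simp add: ln_realpow mult_left_mono)
  finally show "ln R \<le> - real f * ln b + b * real f / real N" by (simp add: field_simps)
  have "real f * (- ln b - 4 * b * real f / real N) \<le> ln ((1 - real m / (real N - real f)) ^ f)"
    using lower by (simp add: ln_realpow mult_left_mono)
  also have "\<dots> \<le> ln R" using bounds R lower by simp
  finally show "- real f * ln b - 4 * b * real f ^ 2 / real N \<le> ln R"
    by (simp add: field_simps power2_eq_square)
qed

section \<open>A non-asymptotic estimate of the first moment\<close>

lemma inner_pairs_bounds:
  assumes "k > 0"
  shows "real n * (real n / real k - 1) / 2 \<le> real (inner_pairs n k)"
    and "real (inner_pairs n k) \<le> real n * (real n / real k - 1) / 2 + real k / 2"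
proof -
  define s r where "s = n div k" "r = n mod k"
  have r: "r < k" using assms by (simp add: s_r_def)
  have n: "real n = real k * real s + real r"
    unfolding s_r_def by (metis div_mult_mod_eq of_nat_add of_nat_mult mult.commute)
  have "inner_pairs n k = (\<Sum>i<k. if i < r then Suc s choose 2 else s choose 2)"
    unfolding inner_pairs_def by (intro sum.cong) (auto simp: equipart_size_def s_r_def)
  also have "\<dots> = r * (Suc s choose 2) + (k - r) * (s choose 2)"
    using sum_if_less[of r k "Suc s choose 2" "s choose 2"] r by (simp add: of_nat_id)
  finally have "2 * real (inner_pairs n k) = real k * real s ^ 2 - real k * real s + 2 * real r * real s"
    using r by (simp add: real_choose_two of_nat_diff field_simps power2_eq_square)
  also have "\<dots> = real n * (real n / real k - 1) + real r * (real k - real r) / real k"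
    unfolding n using assms by (simp add: field_simps power2_eq_square)
  finally have f2: "2 * real (inner_pairs n k)
      = real n * (real n / real k - 1) + real r * (real k - real r) / real k" .
  have "real r * (real k - real r) \<le> real k * real k" using r by (intro mult_mono) auto
  then have "0 \<le> real r * (real k - real r) / real k" "real r * (real k - real r) / real k \<le> real k"
    using r assms by (simp_all add: divide_le_eq)
  moreover have "\<And>A B F :: real. 2 * F = A + B \<Longrightarrow> 0 \<le> B \<Longrightarrow> B \<le> real k \<Longrightarrow>
      A / 2 \<le> F \<and> F \<le> A / 2 + real k / 2"
    by linarith
  ultimately show "real n * (real n / real k - 1) / 2 \<le> real (inner_pairs n k)"
    and "real (inner_pairs n k) \<le> real n * (real n / real k - 1) / 2 + real k / 2"
    using f2 by blast+
qed

lemma ln_floor_bounds: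
  fixes s t :: real
  assumes "1 \<le> s" "s \<le> t" "t < s + 1"
  shows "ln t - 2 / t \<le> ln s" and "ln (s + 1) \<le> ln t + 1 / t"
proof -
  have "ln (t / s) \<le> t / s - 1" using assms by (intro ln_le_minus_one) simp
  moreover have "t / s - 1 \<le> 2 / t"
  proof -
    have "t / s - 1 = (t - s) / s" using assms by (simp add: field_simps)
    also have "\<dots> \<le> 1 / s" using assms by (intro divide_right_mono) auto
    also have "\<dots> \<le> 2 / t" using assms by (simp add: field_simps)
    finally show ?thesis .
  qed
  ultimately show "ln t - 2 / t \<le> ln s" using assms by (simp add: ln_div)
  have "ln ((s + 1) / t) \<le> (s + 1) / t - 1" using assms by (intro ln_le_minus_one) simp
  moreover have "(s + 1) / t - 1 \<le> 1 / t" using assms by (simp add: field_simps)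
  ultimately show "ln (s + 1) \<le> ln t + 1 / t" using assms by (simp add: ln_div)
qed

lemma ln_prod_fact_equipart_size_bounds:
  assumes "k > 0" "2 \<le> real n / real k"
  defines "t \<equiv> real n / real k"
  shows "real n * ln t - real n - 2 * real k \<le> ln (\<Prod>i<k. fact (equipart_size n k i))"
    and "ln (\<Prod>i<k. fact (equipart_size n k i)) \<le> real n * ln t - real n + real k * ln (t + 1) + 2 * real k"
proof -
  define s where "s = n div k"
  have "real n = real k * real s + real (n mod k)"
    unfolding s_def by (metis div_mult_mod_eq of_nat_add of_nat_mult mult.commute)
  then have st: "real s \<le> t" "t < real s + 1"
    using assms(1) mod_less_divisor[OF assms(1), of n] unfolding t_def by (simp_all add: field_simps)
  then have s: "1 \<le> s" using assms(2) unfolding t_def by linarith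
  have sizes: "s \<le> equipart_size n k i" "equipart_size n k i \<le> Suc s" for i
    by (auto simp: equipart_size_def s_def)
  have sum_n: "(\<Sum>i<k. real (equipart_size n k i) * X) = real n * X" for X
    using arg_cong[where f = real, OF sum_equipart_size[OF assms(1), of n]]
    by (simp add: sum_distrib_right [symmetric])
  have ln_prod: "ln (\<Prod>i<k. fact (equipart_size n k i) :: real) = (\<Sum>i<k. ln (fact (equipart_size n k i)))"
    by (simp add: ln_prod)
  have "n > 0" using assms(2) by (cases "n = 0") auto
  then have nk: "real n * (1 / t) = real k" "real n * 2 / t = 2 * real k"
    using assms(1) unfolding t_def by simp_all
  note ln_s = ln_floor_bounds[OF _ st] and ln_fact = ln_fact_between[OF s sizes]
  have "real n * (ln t - 2 / t) \<le> real n * ln (real s)"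
    using ln_s(1) s by (intro mult_left_mono) auto
  also have "real n * ln (real s) - real n = (\<Sum>i<k. real (equipart_size n k i) * (ln (real s) - 1))"
    unfolding sum_n by (simp add: algebra_simps)
  also have "\<dots> \<le> (\<Sum>i<k. ln (fact (equipart_size n k i)))"
    by (intro sum_mono ln_fact(1))
  finally show "real n * ln t - real n - 2 * real k \<le> ln (\<Prod>i<k. fact (equipart_size n k i))"
    using nk by (simp add: ln_prod algebra_simps)
  have "(\<Sum>i<k. ln (fact (equipart_size n k i)))
      \<le> (\<Sum>i<k. real (equipart_size n k i) * (ln (real s + 1) - 1) + ln (real s + 1) + 1)"
    by (intro sum_mono ln_fact(2))
  also have "\<dots> = real n * ln (real s + 1) - real n + real k * ln (real s + 1) + real k"
    unfolding sum.distrib sum_n by (simp add: algebra_simps)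
  also have "real n * ln (real s + 1) \<le> real n * (ln t + 1 / t)"
    using ln_s(2) s by (intro mult_left_mono) auto
  also have "real k * ln (real s + 1) \<le> real k * ln (t + 1)"
    using st s by (intro mult_left_mono) auto
  finally show "ln (\<Prod>i<k. fact (equipart_size n k i)) \<le> real n * ln t - real n + real k * ln (t + 1) + 2 * real k"
    using nk by (simp add: ln_prod algebra_simps)
qed

lemma ln_independence_probability_bounds:
  fixes p b :: real and n k :: nat
  assumes p: "0 < p" "p < 1" "b = 1 / (1 - p)" and k: "k > 0" "8 * b \<le> real k" and n: "n \<ge> 2"
    and t2: "2 \<le> real n / real k"
  defines "t \<equiv> real n / real k" and "f \<equiv> inner_pairs n k"
    and "R \<equiv> real (((n choose 2) - m_edges p n) choose inner_pairs n k)
      / real ((n choose 2) choose inner_pairs n k)"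
  shows "m_edges p n + f \<le> n choose 2" and "R > 0"
    and "- real f * ln b - 4 * b * t ^ 2 \<le> ln R" and "ln R \<le> - real f * ln b + 2 * b"
proof -
  define N where "N = n choose 2"
  have b: "b > 1" using p by (simp add: less_divide_eq)
  have kn: "real k \<le> real n" and tk: "t * real k = real n"
    using t2 k by (simp_all add: t_def field_simps)
  have N: "real N = real n * (real n - 1) / 2" "real n ^ 2 / 4 \<le> real N"
    using n by (simp_all add: N_def real_choose_two power2_eq_square field_simps)
  have N0: "real N > 0" unfolding N_def using n by simp
  have f_upper: "real f \<le> real n * t / 2"
    using inner_pairs_bounds(2)[OF k(1), of n] kn unfolding f_def t_def by (simp add: field_simps)
  have f_over_N: "real f / real N \<le> 2 / real k"
  proof -
    have "real f / real N \<le> (real n * t / 2) / (real n ^ 2 / 4)"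
      using f_upper N N0 n by (intro frac_le) auto
    also have "\<dots> = 2 / real k" using n k unfolding t_def by (simp add: field_simps power2_eq_square)
    finally show ?thesis .
  qed
  also have "2 / real k \<le> 2 / (8 * b)" using k b by (intro divide_left_mono) auto
  finally have "real f \<le> real N / (4 * b)" using N0 b by (simp add: field_simps)
  note ratio = ln_choose_diff_ratio_bounds[OF p N0 m_edges_bounds[OF p(1), of n, folded N_def] this,
      folded f_def]
  have R_N: "R = real ((N - m_edges p n) choose f) / real (N choose f)"
    unfolding R_def N_def f_def ..
  show "m_edges p n + f \<le> n choose 2" "R > 0" using ratio(1,2) unfolding R_N N_def by simp_all
  have "real f ^ 2 / real N = real f * (real f / real N)" by (simp add: power2_eq_square)
  also have "\<dots> \<le> (real n * t / 2) * (2 / real k)"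
    using f_upper f_over_N by (intro mult_mono) auto
  also have "\<dots> = t ^ 2" using tk k by (simp add: field_simps power2_eq_square)
  finally have "real f ^ 2 / real N \<le> t ^ 2" .
  from mult_left_mono[OF this, of "4 * b"] b
  have "4 * b * real f ^ 2 / real N \<le> 4 * b * t ^ 2" by simp
  then show "- real f * ln b - 4 * b * t ^ 2 \<le> ln R" using ratio(3) unfolding R_N by linarith
  have "2 / real k \<le> 2" using k by (simp add: field_simps)
  with f_over_N have "real f / real N \<le> 2" by linarith
  from mult_left_mono[OF this, of b] b have "b * real f / real N \<le> 2 * b" by simp
  then show "ln R \<le> - real f * ln b + 2 * b" using ratio(4) unfolding R_N by linarith
qed

lemma ln_mu_bar_estimate:
  fixes p b :: real and n k :: nat
  assumes p: "0 < p" "p < 1" "b = 1 / (1 - p)" and k: "k > 0" "8 * b \<le> real k" and n: "n \<ge> 2"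
    and t2: "2 \<le> real n / real k"
  defines "t \<equiv> real n / real k"
  shows "mu_bar p n k > 0"
    and "\<bar>ln (mu_bar p n k) - (real n - real k) * (ln (real k) - t * ln b / 2)\<bar>
      \<le> 4 * real k + real k * ln (t + 1) + real k * ln b + 4 * b * t ^ 2 + 2 * b + ln (real n) + 1"
proof -
  define f where "f = inner_pairs n k"
  define R where "R = real (((n choose 2) - m_edges p n) choose f) / real ((n choose 2) choose f)"
  note ratio = ln_independence_probability_bounds[OF p k n t2, folded t_def f_def, folded R_def]
  have b: "b > 1" using p by (simp add: less_divide_eq)
  have kn: "real k \<le> real n" using t2 k by (simp add: field_simps)
  have eq: "mu_bar p n k = fact n / ((\<Prod>i<k. fact (equipart_size n k i))
      * (fact (n mod k) * fact (k - n mod k))) * R"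
    using mu_bar_eq[OF k(1) ratio(1)[unfolded f_def]] unfolding R_def f_def by simp
  then show "mu_bar p n k > 0" using ratio(2) by (simp add: prod_pos)
  then have ln_mu_bar: "ln (mu_bar p n k) = ln (fact n) - ln (\<Prod>i<k. fact (equipart_size n k i))
      - ln (fact (n mod k) * fact (k - n mod k)) + ln R"
    using ratio(2) unfolding eq by (simp add: ln_div ln_mult prod_pos)
  have "n mod k \<le> k" "1 \<le> k" using k by (simp_all add: less_imp_le)
  note fact_n = ln_fact_bounds[of n] and fact_parts = ln_prod_fact_equipart_size_bounds[OF k(1) t2, folded t_def]
    and fact_split = ln_fact_mult_fact_bounds[OF this]
  have lnb: "ln b \<ge> 0" using b by simp
  note pairs = mult_right_mono[OF inner_pairs_bounds(1)[OF k(1), of n, folded t_def f_def] lnb]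
    mult_right_mono[OF inner_pairs_bounds(2)[OF k(1), of n, folded t_def f_def] lnb]
  have "(real n * (t - 1) / 2 + real k / 2) * ln b = real n * (t - 1) / 2 * ln b + real k * ln b / 2"
    "(real n - real k) * (ln (real k) - t * ln b / 2)
      = real n * ln (real n) - real n * ln t - real k * ln (real k) - real n * (t - 1) / 2 * ln b"
    using k n by (simp_all add: t_def ln_div field_simps)
  moreover have "ln (real k) \<le> ln (real n)" using kn k by simp
  moreover have "0 \<le> real k * ln (t + 1)" "0 \<le> real k * ln b" "0 \<le> b" "0 \<le> b * t ^ 2"
    using t2 b by (simp_all add: t_def)
  ultimately show "\<bar>ln (mu_bar p n k) - (real n - real k) * (ln (real k) - t * ln b / 2)\<bar>
      \<le> 4 * real k + real k * ln (t + 1) + real k * ln b + 4 * b * t ^ 2 + 2 * b + ln (real n) + 1"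
    using ln_mu_bar fact_n fact_parts fact_split ratio(3,4) pairs n
    unfolding abs_le_iff by (intro conjI) linarith+
qed

section \<open>Asymptotics\<close>

lemma tendsto_bounded_mult_zero:
  fixes x y :: "nat \<Rightarrow> real"
  assumes "x \<in> O(\<lambda>_. 1)" and "(y \<longlongrightarrow> 0) at_top"
  shows "((\<lambda>n. x n * y n) \<longlongrightarrow> 0) at_top"
proof -
  have "y \<in> o(\<lambda>_. 1)" using assms(2) by (intro smalloI_tendsto) auto
  from smalloD_tendsto[OF landau_o.big_small_mult[OF assms(1) this]] show ?thesis by simp
qed

lemma tendsto_over_ln_of_log_expansion:
  fixes b :: real and x \<gamma> :: "nat \<Rightarrow> real"
  assumes "b > 1" and "x \<in> O(\<lambda>_. 1)"
    and "\<And>n. \<gamma> n = 2 * log b (real n) - 2 * log b (log b (real n)) - 2 * log b 2"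
  shows "((\<lambda>n. (x n + \<gamma> n) / ln (real n)) \<longlongrightarrow> 2 / ln b) at_top"
proof -
  have c: "ln b > 0" using assms(1) by simp
  have "\<gamma> = (\<lambda>n. 2 * ln (real n) / ln b - 2 * ln (ln (real n) / ln b) / ln b - 2 * ln 2 / ln b)"
    using assms(3) by (simp add: log_def fun_eq_iff)
  then have "((\<lambda>n. \<gamma> n / ln (real n)) \<longlongrightarrow> 2 / ln b) at_top"
    using c by simp (real_asymp simp add: divide_inverse)
  moreover have "((\<lambda>n. x n * (1 / ln (real n))) \<longlongrightarrow> 0) at_top"
    by (rule tendsto_bounded_mult_zero[OF assms(2)]) real_asymp
  ultimately show ?thesis
    using tendsto_add by (fastforce simp: add_divide_distrib)
qed

lemma growth_of_ln_multiple:
  fixes t :: "nat \<Rightarrow> real"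
  assumes "((\<lambda>n. t n / ln (real n)) \<longlongrightarrow> a) at_top" and "a > 0"
  shows "filterlim t at_top at_top" and "((\<lambda>n. t n ^ 2 / real n) \<longlongrightarrow> 0) at_top"
proof -
  have ln_pos: "\<forall>\<^sub>F n in at_top. ln (real n) > 0" by real_asymp
  have "filterlim (\<lambda>n. t n / ln (real n) * ln (real n)) at_top at_top"
    by (rule filterlim_tendsto_pos_mult_at_top[OF assms]) real_asymp
  moreover have "\<forall>\<^sub>F n in at_top. t n / ln (real n) * ln (real n) = t n"
    using ln_pos by eventually_elim simp
  ultimately show "filterlim t at_top at_top"
    by (simp add: filterlim_cong)
  have "((\<lambda>n. (t n / ln (real n)) ^ 2 * (ln (real n) ^ 2 / real n)) \<longlongrightarrow> a ^ 2 * 0) at_top"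
    by (intro tendsto_mult tendsto_power assms(1)) real_asymp
  moreover have "\<forall>\<^sub>F n in at_top. (t n / ln (real n)) ^ 2 * (ln (real n) ^ 2 / real n) = t n ^ 2 / real n"
    using ln_pos by eventually_elim (simp add: power_divide)
  ultimately show "((\<lambda>n. t n ^ 2 / real n) \<longlongrightarrow> 0) at_top"
    by (rule Lim_transform_eventually[THEN tendsto_eq_rhs]) simp
qed

lemma ln_mu_bar_error_over_n_tendsto:
  fixes b :: real and k :: "nat \<Rightarrow> nat" and t :: "nat \<Rightarrow> real"
  assumes "\<And>n. t n = real n / real (k n)"
    and "filterlim t at_top at_top" and "((\<lambda>n. t n ^ 2 / real n) \<longlongrightarrow> 0) at_top"
  shows "((\<lambda>n. (4 * real (k n) + real (k n) * ln (t n + 1) + real (k n) * ln b + 4 * b * t n ^ 2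
      + 2 * b + ln (real n) + 1) / real n) \<longlongrightarrow> 0) at_top"
proof -
  have inv_t: "((\<lambda>n. 1 / t n) \<longlongrightarrow> 0) at_top"
    by (rule filterlim_compose[OF _ assms(2), of "\<lambda>u. 1 / u"]) real_asymp
  have ln_t: "((\<lambda>n. ln (t n + 1) / t n) \<longlongrightarrow> 0) at_top"
    by (rule filterlim_compose[OF _ assms(2), of "\<lambda>u. ln (u + 1) / u"]) real_asymp
  have "((\<lambda>n. (4 + ln b) * (1 / t n) + ln (t n + 1) / t n + 4 * b * (t n ^ 2 / real n)
      + 2 * b * (1 / real n) + ln (real n) / real n + 1 / real n)
      \<longlongrightarrow> (4 + ln b) * 0 + 0 + 4 * b * 0 + 2 * b * 0 + 0 + 0) at_top"
    by (intro tendsto_intros inv_t ln_t assms(3))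
  moreover have "\<forall>\<^sub>F n in at_top. (4 + ln b) * (1 / t n) + ln (t n + 1) / t n + 4 * b * (t n ^ 2 / real n)
      + 2 * b * (1 / real n) + ln (real n) / real n + 1 / real n
      = (4 * real (k n) + real (k n) * ln (t n + 1) + real (k n) * ln b + 4 * b * t n ^ 2
      + 2 * b + ln (real n) + 1) / real n"
    using eventually_gt_at_top[of 0] assms(2)[unfolded filterlim_at_top_dense, rule_format, of 0]
  proof eventually_elim
    case (elim n)
    then have "real (k n) > 0" using assms(1)[of n] by (simp add: zero_less_divide_iff)
    then show ?case using elim by (simp add: assms(1) field_simps)
  qed
  ultimately show ?thesis by (rule Lim_transform_eventually[THEN tendsto_eq_rhs]) simp
qed

lemma ln_mu_bar_main_term_over_n_tendsto:
  fixes b :: real and k :: "nat \<Rightarrow> nat" and t x \<gamma> :: "nat \<Rightarrow> real"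
  assumes "b > 1" and t: "\<And>n. t n = real n / real (k n)" "\<And>n. t n = x n + \<gamma> n"
    and \<gamma>: "\<And>n. \<gamma> n = 2 * log b (real n) - 2 * log b (log b (real n)) - 2 * log b 2"
    and "x \<in> O(\<lambda>_. 1)" and t_ln: "((\<lambda>n. t n / ln (real n)) \<longlongrightarrow> 2 / ln b) at_top"
    and t_top: "filterlim t at_top at_top"
  shows "((\<lambda>n. (real n - real (k n)) * (ln (real (k n)) - t n * ln b / 2) / real n
      + x n * ln b / 2) \<longlongrightarrow> 0) at_top"
proof -
  define c where "c = ln b"
  have c: "c > 0" using assms(1) by (simp add: c_def)
  define L where "L n = ln (2 * ln (real n) / (c * t n))" for n
  have inv_t: "((\<lambda>n. 1 / t n) \<longlongrightarrow> 0) at_top"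
    by (rule filterlim_compose[OF _ t_top, of "\<lambda>u. 1 / u"]) real_asymp
  have "((\<lambda>n. ln ((2 / c) / (t n / ln (real n)))) \<longlongrightarrow> ln ((2 / c) / (2 / c))) at_top"
    using c by (intro tendsto_ln tendsto_divide tendsto_const t_ln[folded c_def]) auto
  moreover have "\<forall>\<^sub>F n in at_top. ln ((2 / c) / (t n / ln (real n))) = L n"
    by (simp add: L_def field_simps)
  ultimately have L: "(L \<longlongrightarrow> 0) at_top"
    using c by (simp add: tendsto_cong)
  have "((\<lambda>n. (1 - 1 / t n) * L n + x n * (c / 2 * (1 / t n))) \<longlongrightarrow> (1 - 0) * 0 + 0) at_top"
    by (intro tendsto_intros inv_t L tendsto_bounded_mult_zero[OF assms(5)]
        tendsto_mult_right_zero[OF inv_t])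
  moreover have "\<forall>\<^sub>F n in at_top. (1 - 1 / t n) * L n + x n * (c / 2 * (1 / t n))
      = (real n - real (k n)) * (ln (real (k n)) - t n * c / 2) / real n + x n * c / 2"
    using eventually_ge_at_top[of 2] t_top[unfolded filterlim_at_top_dense, rule_format, of 0]
  proof eventually_elim
    \<comment> \<open>the definition of \<open>\<gamma>\<close> is exactly what makes \<open>ln k - t ln b / 2 = L - x ln b / 2\<close>\<close>
    case (elim n)
    then have pos: "real (k n) > 0" "ln (real n) > 0" "real n > 0"
      using t(1)[of n] by (auto simp: zero_less_divide_iff)
    have "t n * c / 2 = x n * c / 2 + ln (real n) - ln (ln (real n) / c) - ln 2"
      using c unfolding t(2) \<gamma> log_def c_def by (simp add: field_simps)
    moreover have "L n = ln 2 + ln (ln (real n) / c) - ln (t n)"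
      using pos c elim unfolding L_def by (simp add: ln_div ln_mult)
    moreover have "ln (real (k n)) = ln (real n) - ln (t n)"
      using pos unfolding t(1) by (simp add: ln_div)
    ultimately have "ln (real (k n)) - t n * c / 2 = L n - x n * c / 2" by linarith
    then have "(real n - real (k n)) * (ln (real (k n)) - t n * c / 2) / real n
        = (real n - real (k n)) / real n * (L n - x n * c / 2)"
      by simp
    also have "(real n - real (k n)) / real n = 1 - 1 / t n"
      using pos unfolding t(1) by (simp add: field_simps)
    finally show ?case
      using elim by (simp add: field_simps)
  qed
  ultimately show ?thesis
    unfolding c_def by (rule Lim_transform_eventually[THEN tendsto_eq_rhs]) simp
qed

lemma ln_mu_bar_over_n_tendsto:
  fixes p b :: real and k :: "nat \<Rightarrow> nat" and \<gamma> x :: "nat \<Rightarrow> real"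
  assumes p: "0 < p" "p < 1" "b = 1 / (1 - p)"
    and \<gamma>: "\<And>n. \<gamma> n = 2 * log b (real n) - 2 * log b (log b (real n)) - 2 * log b 2"
    and k: "\<And>n. k n > 0" and x: "\<And>n. x n = real n / real (k n) - \<gamma> n" "x \<in> O(\<lambda>_. 1)"
  shows "\<forall>\<^sub>F n in at_top. mu_bar p n (k n) > 0"
    and "((\<lambda>n. ln (mu_bar p n (k n)) / real n + x n * ln b / 2) \<longlongrightarrow> 0) at_top"
proof -
  define t where "t n = real n / real (k n)" for n
  define M where "M n = (real n - real (k n)) * (ln (real (k n)) - t n * ln b / 2)" for n
  define E where "E n = 4 * real (k n) + real (k n) * ln (t n + 1) + real (k n) * ln b
    + 4 * b * t n ^ 2 + 2 * b + ln (real n) + 1" for n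
  have b: "b > 1" using p by (simp add: less_divide_eq)
  have tx: "t n = x n + \<gamma> n" for n by (simp add: t_def x(1))
  have t_ln: "((\<lambda>n. t n / ln (real n)) \<longlongrightarrow> 2 / ln b) at_top"
    using tendsto_over_ln_of_log_expansion[OF b x(2) \<gamma>] by (simp add: tx)
  have "2 / ln b > 0" using b by simp
  note growth = growth_of_ln_multiple[OF t_ln this]
  have "1 / (8 * b) > 0" using b by simp
  have "\<forall>\<^sub>F n in at_top. n \<ge> 2 \<and> 2 \<le> t n \<and> t n ^ 2 / real n \<le> 1 / (8 * b)"
    using eventually_ge_at_top[of 2] growth(1)[unfolded filterlim_at_top, THEN spec, of 2]
      order_tendstoD(2)[OF growth(2) \<open>1 / (8 * b) > 0\<close>]
    by eventually_elim auto
  then have estimate: "\<forall>\<^sub>F n in at_top. mu_bar p n (k n) > 0 \<and> \<bar>ln (mu_bar p n (k n)) - M n\<bar> \<le> E n"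
  proof eventually_elim
    case (elim n)
    then have "t n / real n \<le> t n ^ 2 / real n" by (simp add: divide_right_mono power2_eq_square)
    moreover have "t n / real n = 1 / real (k n)" using elim k[of n] by (simp add: t_def)
    ultimately have "1 / real (k n) \<le> 1 / (8 * b)" using elim by linarith
    then have "8 * b \<le> real (k n)" using b k[of n] by (simp add: field_simps)
    with elim show ?case
      using ln_mu_bar_estimate[OF p k[of n]] by (simp add: M_def E_def t_def)
  qed
  then show "\<forall>\<^sub>F n in at_top. mu_bar p n (k n) > 0" by (rule eventually_mono) simp
  have "((\<lambda>n. (ln (mu_bar p n (k n)) - M n) / real n) \<longlongrightarrow> 0) at_top"
  proof (rule Lim_null_comparison)
    show "\<forall>\<^sub>F n in at_top. norm ((ln (mu_bar p n (k n)) - M n) / real n) \<le> E n / real n"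
      using estimate by eventually_elim (simp add: abs_divide divide_right_mono)
    show "((\<lambda>n. E n / real n) \<longlongrightarrow> 0) at_top"
      unfolding E_def by (rule ln_mu_bar_error_over_n_tendsto[OF t_def growth(1,2)])
  qed
  moreover have "((\<lambda>n. M n / real n + x n * ln b / 2) \<longlongrightarrow> 0) at_top"
    unfolding M_def
    by (rule ln_mu_bar_main_term_over_n_tendsto[OF b t_def tx \<gamma> x(2) t_ln growth(1)])
  ultimately show "((\<lambda>n. ln (mu_bar p n (k n)) / real n + x n * ln b / 2) \<longlongrightarrow> 0) at_top"
    using tendsto_add by (fastforce simp: diff_divide_distrib)
qed

lemma powr_representation_of_ln_limit:
  fixes b :: real and h x :: "nat \<Rightarrow> real"
  assumes "b > 1" and "\<forall>\<^sub>F n in at_top. h n > 0"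
    and "((\<lambda>n. ln (h n) / real n + x n * ln b / 2) \<longlongrightarrow> 0) at_top"
  shows "\<exists>g. g \<in> o(\<lambda>n. real n) \<and> (\<forall>\<^sub>F n in at_top. h n = b powr (- (x n / 2) * real n + g n))"
proof (intro exI conjI)
  define g where "g n = ln (h n) / ln b + x n * real n / 2" for n
  have "((\<lambda>n. (ln (h n) / real n + x n * ln b / 2) / ln b) \<longlongrightarrow> 0 / ln b) at_top"
    by (intro tendsto_divide assms(3) tendsto_const) (use assms(1) in simp)
  moreover have "\<forall>\<^sub>F n in at_top. (ln (h n) / real n + x n * ln b / 2) / ln b = g n / real n"
    using eventually_gt_at_top[of 0] by eventually_elim (use assms(1) in \<open>simp add: g_def field_simps\<close>)
  ultimately have "((\<lambda>n. g n / real n) \<longlongrightarrow> 0) at_top"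
    by (simp add: tendsto_cong)
  then show "g \<in> o(\<lambda>n. real n)"
    by (rule smalloI_tendsto) (use eventually_gt_at_top[of 0] in \<open>eventually_elim, simp\<close>)
  show "\<forall>\<^sub>F n in at_top. h n = b powr (- (x n / 2) * real n + g n)"
    using assms(2) by eventually_elim (use assms(1) in \<open>simp add: g_def powr_def\<close>)
qed

theorem lemma1:
  fixes p b :: real and k :: "nat \<Rightarrow> nat" and \<gamma> x :: "nat \<Rightarrow> real"
  assumes "0 < p" and "p < 1 - 1 / exp 2"
    and "b = 1 / (1 - p)"
    and "\<And>n. \<gamma> n = 2 * log b (real n) - 2 * log b (log b (real n)) - 2 * log b 2"
    and "\<And>n. k n > 0"
    and "\<And>n. x n = real n / real (k n) - \<gamma> n"
    and "x \<in> O(\<lambda>_. 1)"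
  shows "\<exists>g. g \<in> o(\<lambda>n. real n) \<and>
           (\<forall>\<^sub>F n in at_top. mu_bar p n (k n) = b powr (- (x n / 2) * real n + g n))"
proof -
  \<comment> \<open>the first moment only needs \<open>p < 1\<close>\<close>
  have "p < 1" using assms(2) by (smt (verit) divide_pos_pos exp_gt_zero)
  note limit = ln_mu_bar_over_n_tendsto[OF assms(1) this assms(3-7)]
  have "b > 1" using assms(1,3) \<open>p < 1\<close> by (simp add: less_divide_eq)
  then show ?thesis by (rule powr_representation_of_ln_limit[OF _ limit])
qed

end
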